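(* For every integer $k\ge1$, every $n\ge2$ and every $\sigma\in(-1,0)$, \[ \mathbb{E}[D_n^k]=-\frac{k!}{2\pi i}\int_{\sigma-i\infty}^{\sigma+i\infty}\frac{\Gamma(s)\Gamma(n)/\Gamma(n+s)}{\big(\psi(1-s)-\psi(1)\big)^k}\,ds, \] where the integral converges absolutely.
   Context: $D_n$ is the absorption time at state 1 of the continuous-time Markov chain on $\{1,2,\dots\}$ started at $n$ that jumps from $m$ to $i$ at rate $1/(m-i)$ for $1\le i\le m-1$. $\psi=\Gamma'/\Gamma$ is the digamma function. *)

theory Defs
  imports "HOL-Probability.Probability"
begin

text \<open>The continuous-time Markov chain on the positive integers which jumps from m to i
  (for 1 <= i <= m-1) at rate 1/(m-i); state 1 is absorbing.  It is described by its
  standard jump-chain / holding-time construction.\<close>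

definition jump_rate :: "nat \<Rightarrow> nat \<Rightarrow> real" where
  "jump_rate m i = (if 1 \<le> i \<and> i < m then 1 / real (m - i) else 0)"

definition total_rate :: "nat \<Rightarrow> real" where
  "total_rate m = (\<Sum>i\<in>{1..<m}. jump_rate m i)"

definition jump_paths :: "nat \<Rightarrow> nat list set" where
  "jump_paths n = {ms. ms \<noteq> [] \<and> hd ms = n \<and> last ms = 1 \<and> sorted_wrt (>) ms}"

definition path_prob :: "nat list \<Rightarrow> real" where
  "path_prob ms = (\<Prod>j<length ms - 1. jump_rate (ms ! j) (ms ! Suc j) / total_rate (ms ! j))"

definition holding_measure :: "nat list \<Rightarrow> (nat \<Rightarrow> real) measure" where
  "holding_measure ms = PiM {..<length ms - 1}
      (\<lambda>j. density lborel (exponential_density (total_rate (ms ! j))))"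

text \<open>k-th moment of the absorption time D_n: conditioning on the jump path,
  D_n is the sum of the holding times.\<close>
definition D_moment :: "nat \<Rightarrow> nat \<Rightarrow> real" where
  "D_moment n k = (\<Sum>ms\<in>jump_paths n. path_prob ms *
      (\<integral>t. (\<Sum>j<length ms - 1. t j) ^ k \<partial>holding_measure ms))"

end

(* Conditioned on its jump path, D_n is a sum of independent exponential holding times, so
   E[D_n^k] / k! is the k-th coefficient of a formal power series P_n.  Conditioning on the first
   jump gives (H_{n-1} - x) P_n = sum_{i<n} P_i / (n - i), with H the harmonic numbers, and the
   identity sum_{p<N} C(p,j) / (N - p) = C(N,j) (H_N - H_j) shows that this recursion is solved by
   E[D_n^k] = k! sum_{j=1}^{n-1} (-1)^(j+1) C(n-1,j) / H_j^k.

   On the analytic side Gamma(s) Gamma(n) / Gamma(n+s) = (n-1)! / (s)_n has simple poles at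
   s = -j with residues (-1)^j C(n-1,j), and psi(1+j) - psi(1) = H_j.  For Re s <= sigma < 0 the
   real part of psi(1-s) - psi(1) is at least psi(1-sigma) - psi(1) > 0, so the integrand is
   O(|s|^-2) there.  Integrating over the rectangles [-T, sigma] x [-T, T] and letting T tend to
   infinity, the residue theorem gives the same alternating sum. *)

theory Submission
  imports Defs "HOL-Complex_Analysis.Complex_Analysis" "HOL-Computational_Algebra.Formal_Power_Series"
begin

section \<open>Harmonic numbers and the jump rates\<close>

lemma harm_0 [simp]: "harm 0 = (0 :: 'a :: real_normed_field)"
  by (simp add: harm_def)

lemma sum_binomial_div_eq_harm_diff:
  "(\<Sum>p<N. real (p choose j) / real (N - p)) = real (N choose j) * (harm N - harm j)"
proof (induction N arbitrary: j)
  case 0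
  then show ?case by (cases j) auto
next
  case (Suc N)
  have split: "(\<Sum>p<Suc N. real (p choose j) / real (Suc N - p))
      = real (0 choose j) / real (Suc N) + (\<Sum>p<N. real (Suc p choose j) / real (N - p))"
    by (subst sum.lessThan_Suc_shift) simp
  show ?case
  proof (cases j)
    case 0
    then show ?thesis using split Suc.IH[of 0] by (simp add: harm_Suc inverse_eq_divide)
  next
    case (Suc i)
    have "(\<Sum>p<N. real (Suc p choose j) / real (N - p))
        = (\<Sum>p<N. real (p choose i) / real (N - p)) + (\<Sum>p<N. real (p choose j) / real (N - p))"
      unfolding Suc by (simp add: sum.distrib[symmetric] add_divide_distrib)
    also have "\<dots> = real (N choose i) * (harm N - harm i) + real (N choose j) * (harm N - harm j)"
      using Suc.IH by simp
    also have "\<dots> = real (Suc N choose j) * (harm (Suc N) - harm j)"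
    proof -
      have pascal: "real (Suc N choose j) = real (N choose i) + real (N choose j)"
        unfolding Suc by simp
      have "real (Suc i) * real (Suc N choose j) = real (Suc N) * real (N choose i)"
        unfolding Suc by (metis Suc_times_binomial of_nat_mult)
      then have absorb: "real (Suc N choose j) * (1 / real (Suc N)) = real (N choose i) * (1 / real (Suc i))"
        by (simp add: field_simps)
      have "\<And>A B C h g u v :: real. C = A + B \<Longrightarrow> C * u = A * v \<Longrightarrow>
          A * (h - g) + B * (h - (g + v)) = C * ((h + u) - (g + v))"
        by (simp add: algebra_simps)
      from this[OF pascal absorb] show ?thesis
        unfolding Suc harm_Suc by (simp add: inverse_eq_divide)
    qed
    finally show ?thesis using split Suc by simp
  qed
qed

lemma sum_binomial_div_eq_harm_diff':
  "(\<Sum>i\<in>{1..<m}. real ((i - 1) choose j) / real (m - i)) =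
     real ((m - 1) choose j) * (harm (m - 1) - harm j)"
  by (subst sum.atLeastLessThan_shift_0)
     (simp add: atLeast0LessThan flip: sum_binomial_div_eq_harm_diff)

lemma total_rate_eq_harm: "total_rate m = harm (m - 1)"
proof -
  have "total_rate m = (\<Sum>i\<in>{1..<m}. real ((i - 1) choose 0) / real (m - i))"
    unfolding total_rate_def jump_rate_def by (intro sum.cong) auto
  also have "\<dots> = harm (m - 1)"
    by (simp only: sum_binomial_div_eq_harm_diff') simp
  finally show ?thesis .
qed

lemma total_rate_pos: "m \<ge> 2 \<Longrightarrow> total_rate m > 0"
  by (simp add: total_rate_eq_harm)

section \<open>Moments of sums of independent exponential variables\<close>

text \<open>The \<open>a\<close>-th coefficient is \<open>E[X\<^sup>a] / a!\<close> for \<open>X\<close> exponentially distributed with rate \<open>r\<close>.\<close>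

definition exponential_moment_fps :: "real \<Rightarrow> real fps" where
  "exponential_moment_fps r = Abs_fps (\<lambda>a. inverse r ^ a)"

lemma exponential_moment_fps_mult:
  assumes "r \<noteq> 0"
  shows "(fps_const r - fps_X) * exponential_moment_fps r = fps_const r"
proof (rule fps_ext)
  fix n
  show "fps_nth ((fps_const r - fps_X) * exponential_moment_fps r) n = fps_nth (fps_const r) n"
    using assms by (cases n) (simp_all add: algebra_simps exponential_moment_fps_def)
qed

lemma prod_exponential_moment_fps_nth_nonneg:
  assumes "\<And>j. r j > 0"
  shows "fps_nth (\<Prod>j\<in>J. exponential_moment_fps (r j)) k \<ge> 0"
proof (induction J arbitrary: k rule: infinite_finite_induct)
  case (insert j J)
  then show ?case using assms unfolding prod.insert[OF insert(1,2)] fps_mult_nth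
    by (intro sum_nonneg mult_nonneg_nonneg) (auto simp: exponential_moment_fps_def less_imp_le)
qed simp_all

lemma ennreal_sum_mult:
  assumes "\<And>a. a \<in> A \<Longrightarrow> c a \<ge> 0" "\<And>a. a \<in> A \<Longrightarrow> f a \<ge> 0"
  shows "ennreal (\<Sum>a\<in>A. c a * f a) = (\<Sum>a\<in>A. ennreal (c a) * ennreal (f a))"
proof -
  have "(\<Sum>a\<in>A. ennreal (c a) * ennreal (f a)) = (\<Sum>a\<in>A. ennreal (c a * f a))"
    using assms by (intro sum.cong refl ennreal_mult[symmetric]) auto
  also have "\<dots> = ennreal (\<Sum>a\<in>A. c a * f a)"
    using assms by (intro sum_ennreal) auto
  finally show ?thesis ..
qed

lemma exponential_density_mult_shifted_power:
  assumes "r > 0" "s \<ge> 0"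
  shows "ennreal (exponential_density r y) * ennreal ((s + y) ^ k) =
    (\<Sum>a\<le>k. ennreal (real (k choose a) * s ^ a) * ennreal (exponential_density r y * y ^ (k - a)))"
proof (cases "y < 0")
  case False
  have e: "exponential_density r y \<ge> 0"
    using assms by simp
  have "ennreal (exponential_density r y) * ennreal ((s + y) ^ k) =
      ennreal (exponential_density r y * (s + y) ^ k)"
    using e False assms by (simp add: ennreal_mult)
  also have "exponential_density r y * (s + y) ^ k =
      (\<Sum>a\<le>k. real (k choose a) * s ^ a * (exponential_density r y * y ^ (k - a)))"
    by (simp add: binomial_ring sum_distrib_left mult_ac)
  also have "ennreal \<dots> =
      (\<Sum>a\<le>k. ennreal (real (k choose a) * s ^ a) * ennreal (exponential_density r y * y ^ (k - a)))"
    using e False assms by (intro ennreal_sum_mult) auto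
  finally show ?thesis .
qed (simp add: exponential_density_def)

lemma nn_integral_exponential_shifted_power:
  assumes r: "r > 0" and s: "s \<ge> 0"
  shows "(\<integral>\<^sup>+y. ennreal ((s + y) ^ k) \<partial>density lborel (exponential_density r)) =
    ennreal (\<Sum>a\<le>k. fact k / fact a * inverse r ^ (k - a) * s ^ a)"
proof -
  let ?c = "\<lambda>a. real (k choose a) * s ^ a"
  have c: "?c a \<ge> 0" for a using s by simp
  have "(\<integral>\<^sup>+y. ennreal ((s + y) ^ k) \<partial>density lborel (exponential_density r)) =
      (\<integral>\<^sup>+y. (\<Sum>a\<le>k. ennreal (?c a) * ennreal (exponential_density r y * y ^ (k - a))) \<partial>lborel)"
    using assms by (subst nn_integral_density) (auto simp: exponential_density_mult_shifted_power)
  also have "\<dots> = (\<Sum>a\<le>k. ennreal (?c a) * ennreal (fact (k - a) / r ^ (k - a)))"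
    using nn_integral_erlang_ith_moment[OF r, of 0]
    by (subst nn_integral_sum) (auto intro!: sum.cong simp: nn_integral_cmult)
  also have "\<dots> = ennreal (\<Sum>a\<le>k. ?c a * (fact (k - a) / r ^ (k - a)))"
    using r c by (intro ennreal_sum_mult[symmetric]) auto
  also have "(\<Sum>a\<le>k. ?c a * (fact (k - a) / r ^ (k - a))) =
      (\<Sum>a\<le>k. fact k / fact a * inverse r ^ (k - a) * s ^ a)"
  proof (intro sum.cong refl)
    fix a assume "a \<in> {..k}"
    then have "real (k choose a) * fact (k - a) = fact k / fact a"
      by (simp add: binomial_fact field_simps)
    then show "?c a * (fact (k - a) / r ^ (k - a)) = fact k / fact a * inverse r ^ (k - a) * s ^ a"
      by (simp add: divide_inverse power_inverse mult_ac)
  qed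
  finally show ?thesis .
qed

lemma AE_PiM_exponential_nonneg:
  assumes "\<And>j. r j > 0" and "finite J" "J \<subseteq> I"
  shows "AE x in PiM I (\<lambda>j. density lborel (exponential_density (r j))). \<forall>j\<in>J. 0 \<le> x j"
proof (rule AE_finite_allI[OF \<open>finite J\<close>])
  fix j assume "j \<in> J"
  have "AE y in density lborel (exponential_density (r j)). 0 \<le> y"
    by (subst AE_density) (auto simp: exponential_density_def)
  then show "AE x in PiM I (\<lambda>j. density lborel (exponential_density (r j))). 0 \<le> x j"
    using \<open>j \<in> J\<close> assms by (intro AE_PiM_component prob_space_exponential_density) auto
qed

lemma nn_integral_exponentials_lessThan_Suc:
  fixes r :: "nat \<Rightarrow> real"
  assumes r: "\<And>j. r j > 0"
  defines "M \<equiv> \<lambda>j. density lborel (exponential_density (r j))"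
  shows "(\<integral>\<^sup>+x. ennreal ((\<Sum>j<Suc L. x j) ^ k) \<partial>PiM {..<Suc L} M) =
    (\<integral>\<^sup>+x. (\<Sum>a\<le>k. ennreal (fact k / fact a * inverse (r L) ^ (k - a)) * ennreal ((\<Sum>j<L. x j) ^ a))
      \<partial>PiM {..<L} M)" (is "_ = ?rhs")
proof -
  interpret product_prob_space M
    unfolding M_def by (intro product_prob_spaceI prob_space_exponential_density r)
  have meas: "(\<lambda>x. ennreal ((\<Sum>j<Suc L. x j) ^ k)) \<in> borel_measurable (PiM (insert L {..<L}) M)"
    unfolding M_def by measurable auto
  have "(\<integral>\<^sup>+x. ennreal ((\<Sum>j<Suc L. x j) ^ k) \<partial>PiM {..<Suc L} M) =
      (\<integral>\<^sup>+x. ennreal ((\<Sum>j<Suc L. x j) ^ k) \<partial>PiM (insert L {..<L}) M)"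
    by (simp add: lessThan_Suc)
  also have "\<dots> = (\<integral>\<^sup>+x. \<integral>\<^sup>+y. ennreal ((\<Sum>j<Suc L. (x(L := y)) j) ^ k) \<partial>M L \<partial>PiM {..<L} M)"
    by (rule product_nn_integral_insert[OF _ _ meas]) auto
  also have "\<dots> = (\<integral>\<^sup>+x. \<integral>\<^sup>+y. ennreal (((\<Sum>j<L. x j) + y) ^ k) \<partial>M L \<partial>PiM {..<L} M)"
    by (simp add: add.commute)
  also have "\<dots> = ?rhs"
  proof (rule nn_integral_cong_AE)
    show "AE x in PiM {..<L} M. (\<integral>\<^sup>+y. ennreal (((\<Sum>j<L. x j) + y) ^ k) \<partial>M L) =
        (\<Sum>a\<le>k. ennreal (fact k / fact a * inverse (r L) ^ (k - a)) * ennreal ((\<Sum>j<L. x j) ^ a))"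
      using AE_PiM_exponential_nonneg[of r, OF r finite_lessThan subset_refl, folded M_def]
    proof eventually_elim
      case (elim x)
      then have S: "(\<Sum>j<L. x j) \<ge> 0" by (intro sum_nonneg) auto
      then have "(\<integral>\<^sup>+y. ennreal (((\<Sum>j<L. x j) + y) ^ k) \<partial>M L) =
          ennreal (\<Sum>a\<le>k. fact k / fact a * inverse (r L) ^ (k - a) * (\<Sum>j<L. x j) ^ a)"
        unfolding M_def using r by (intro nn_integral_exponential_shifted_power)
      also have "\<dots> = (\<Sum>a\<le>k. ennreal (fact k / fact a * inverse (r L) ^ (k - a)) * ennreal ((\<Sum>j<L. x j) ^ a))"
        using r S by (intro ennreal_sum_mult) (auto simp: less_imp_le)
      finally show ?case .
    qed
  qed
  finally show ?thesis .
qed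

lemma nn_integral_sum_power_exponentials:
  fixes r :: "nat \<Rightarrow> real"
  assumes r: "\<And>j. r j > 0"
  defines "M \<equiv> \<lambda>j. density lborel (exponential_density (r j))"
  shows "(\<integral>\<^sup>+x. ennreal ((\<Sum>j<L. x j) ^ k) \<partial>PiM {..<L} M) =
    ennreal (fact k * fps_nth (\<Prod>j<L. exponential_moment_fps (r j)) k)"
proof (induction L arbitrary: k)
  case 0
  have "prob_space (PiM {} M)"
    by (rule prob_space_PiM) (simp add: M_def prob_space_exponential_density r)
  then show ?case by (simp add: nn_integral_const prob_space.emeasure_space_1)
next
  case (Suc L)
  define P where "P = (\<Prod>j<L. exponential_moment_fps (r j))"
  define c where "c a = fact k / fact a * inverse (r L) ^ (k - a)" for a
  have c: "c a \<ge> 0" for a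
    unfolding c_def using r by (simp add: less_imp_le)
  have [measurable]: "(\<lambda>x. ennreal ((\<Sum>j<L. x j) ^ a)) \<in> borel_measurable (PiM {..<L} M)" for a
    unfolding M_def by measurable
  have "(\<integral>\<^sup>+x. ennreal ((\<Sum>j<Suc L. x j) ^ k) \<partial>PiM {..<Suc L} M) =
      (\<integral>\<^sup>+x. (\<Sum>a\<le>k. ennreal (c a) * ennreal ((\<Sum>j<L. x j) ^ a)) \<partial>PiM {..<L} M)"
    unfolding M_def c_def by (rule nn_integral_exponentials_lessThan_Suc[OF r])
  also have "\<dots> = (\<Sum>a\<le>k. ennreal (c a) * (\<integral>\<^sup>+x. ennreal ((\<Sum>j<L. x j) ^ a) \<partial>PiM {..<L} M))"
    by (subst nn_integral_sum) (auto intro!: sum.cong nn_integral_cmult)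
  also have "\<dots> = ennreal (\<Sum>a\<le>k. c a * (fact a * fps_nth P a))"
    unfolding Suc.IH P_def using c prod_exponential_moment_fps_nth_nonneg[of r, OF r]
    by (intro ennreal_sum_mult[symmetric]) auto
  also have "(\<Sum>a\<le>k. c a * (fact a * fps_nth P a)) =
      fact k * fps_nth (\<Prod>j<Suc L. exponential_moment_fps (r j)) k"
    unfolding prod.lessThan_Suc P_def[symmetric] fps_mult_nth sum_distrib_left atLeast0AtMost
    by (intro sum.cong refl) (simp add: c_def exponential_moment_fps_def)
  finally show ?case .
qed

lemma integral_sum_power_exponentials:
  fixes r :: "nat \<Rightarrow> real"
  assumes r: "\<And>j. r j > 0"
  shows "(\<integral>x. (\<Sum>j<L. x j) ^ k \<partial>PiM {..<L} (\<lambda>j. density lborel (exponential_density (r j)))) =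
    fact k * fps_nth (\<Prod>j<L. exponential_moment_fps (r j)) k"
proof -
  have "AE x in PiM {..<L} (\<lambda>j. density lborel (exponential_density (r j))). 0 \<le> (\<Sum>j<L. x j) ^ k"
    using AE_PiM_exponential_nonneg[of r, OF r finite_lessThan subset_refl]
    by eventually_elim (auto intro!: zero_le_power sum_nonneg)
  moreover have "0 \<le> fact k * fps_nth (\<Prod>j<L. exponential_moment_fps (r j)) k"
    using prod_exponential_moment_fps_nth_nonneg[of r, OF r] by simp
  ultimately show ?thesis
    by (subst integral_eq_nn_integral) (auto simp: nn_integral_sum_power_exponentials[OF r])
qed

lemma jump_paths_1: "jump_paths 1 = {[1]}"
proof (intro equalityI subsetI)
  fix ms assume "ms \<in> jump_paths 1"
  then obtain xs where ms: "ms = 1 # xs" and last: "last (1 # xs) = 1" and below: "\<forall>y\<in>set xs. y < 1"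
    by (cases ms) (auto simp: jump_paths_def)
  have "xs = []"
  proof (rule ccontr)
    assume "xs \<noteq> []"
    then show False using last below last_in_set[of xs] by auto
  qed
  then show "ms \<in> {[1]}" using ms by simp
qed (simp add: jump_paths_def)

lemma jump_paths_Cons:
  assumes "m \<noteq> 1"
  shows "jump_paths m = (\<Union>i\<in>{1..<m}. (#) m ` jump_paths i)"
proof (intro equalityI subsetI)
  fix ms assume ms: "ms \<in> jump_paths m"
  then obtain xs where xs: "ms = m # xs" by (cases ms) (auto simp: jump_paths_def)
  have "xs \<noteq> []" using ms xs assms by (auto simp: jump_paths_def)
  have below: "\<forall>y\<in>set xs. y < m" and sorted: "sorted_wrt (>) xs" and last: "last xs = 1"
    using ms xs \<open>xs \<noteq> []\<close> by (auto simp: jump_paths_def)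
  have "hd xs < m" using below \<open>xs \<noteq> []\<close> by simp
  moreover have "1 \<le> hd xs"
    using sorted last last_in_set[OF \<open>xs \<noteq> []\<close>] \<open>xs \<noteq> []\<close>
    by (cases xs) (auto simp: less_imp_le)
  moreover have "xs \<in> jump_paths (hd xs)" using \<open>xs \<noteq> []\<close> sorted last by (simp add: jump_paths_def)
  ultimately show "ms \<in> (\<Union>i\<in>{1..<m}. (#) m ` jump_paths i)" using xs by auto
next
  fix ms assume "ms \<in> (\<Union>i\<in>{1..<m}. (#) m ` jump_paths i)"
  then obtain i xs where i: "1 \<le> i" "i < m" and xs: "xs \<in> jump_paths i" and ms: "ms = m # xs" by auto
  then have "\<forall>y\<in>set xs. y < m"
    by (cases xs) (auto simp: jump_paths_def)
  then show "ms \<in> jump_paths m" using xs ms by (auto simp: jump_paths_def)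
qed

lemma finite_jump_paths: "finite (jump_paths m)"
proof (induction m rule: less_induct)
  case (less m)
  show ?case
  proof (cases "m = 1")
    case False
    then show ?thesis using less.IH by (simp add: jump_paths_Cons)
  qed (use jump_paths_1 in simp)
qed

lemma jump_paths_nth_ge_2:
  assumes "ms \<in> jump_paths n" "j < length ms - 1"
  shows "ms ! j \<ge> 2"
proof -
  have "ms \<noteq> []" "last ms = 1" "sorted_wrt (>) ms" using assms(1) by (auto simp: jump_paths_def)
  then have "1 < ms ! j"
    using sorted_wrt_nth_less[of "(>)" ms j "length ms - 1"] assms(2) by (simp add: last_conv_nth)
  then show ?thesis by simp
qed

lemma path_prob_Cons:
  assumes "ms \<noteq> []"
  shows "path_prob (m # ms) = jump_rate m (hd ms) / total_rate m * path_prob ms"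
proof -
  obtain l where "length ms = Suc l" using assms by (cases ms) auto
  then show ?thesis unfolding path_prob_def using assms
    by (simp add: prod.lessThan_Suc_shift hd_conv_nth del: prod.lessThan_Suc)
qed

section \<open>The generating function of the moments of the absorption time\<close>

definition holding_fps :: "nat list \<Rightarrow> real fps" where
  "holding_fps ms = (\<Prod>j<length ms - 1. exponential_moment_fps (total_rate (ms ! j)))"

definition moment_fps :: "nat \<Rightarrow> real fps" where
  "moment_fps m = (\<Sum>ms\<in>jump_paths m. fps_const (path_prob ms) * holding_fps ms)"

lemma holding_fps_Cons:
  assumes "ms \<noteq> []"
  shows "holding_fps (m # ms) = exponential_moment_fps (total_rate m) * holding_fps ms"
proof -
  obtain l where "length ms = Suc l" using assms by (cases ms) auto
  then show ?thesis unfolding holding_fps_def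
    by (simp add: prod.lessThan_Suc_shift del: prod.lessThan_Suc)
qed

lemma integral_holding_measure:
  assumes "ms \<in> jump_paths n"
  shows "(\<integral>t. (\<Sum>j<length ms - 1. t j) ^ k \<partial>holding_measure ms) = fact k * fps_nth (holding_fps ms) k"
proof -
  \<comment> \<open>rates beyond the path are irrelevant; padding them with 1 keeps all rates positive\<close>
  define r where "r j = (if j < length ms - 1 then total_rate (ms ! j) else 1)" for j
  have r: "r j > 0" for j
    unfolding r_def using jump_paths_nth_ge_2[OF assms] total_rate_pos by auto
  have "holding_measure ms = PiM {..<length ms - 1} (\<lambda>j. density lborel (exponential_density (r j)))"
    unfolding holding_measure_def by (intro PiM_cong) (auto simp: r_def)
  moreover have "holding_fps ms = (\<Prod>j<length ms - 1. exponential_moment_fps (r j))"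
    unfolding holding_fps_def by (intro prod.cong) (auto simp: r_def)
  ultimately show ?thesis using integral_sum_power_exponentials[OF r] by simp
qed

lemma D_moment_eq_moment_fps: "D_moment n k = fact k * fps_nth (moment_fps n) k"
  unfolding D_moment_def moment_fps_def fps_sum_nth sum_distrib_left
proof (intro sum.cong refl)
  fix ms assume "ms \<in> jump_paths n"
  then show "path_prob ms * (\<integral>t. (\<Sum>j<length ms - 1. t j) ^ k \<partial>holding_measure ms) =
      fact k * fps_nth (fps_const (path_prob ms) * holding_fps ms) k"
    using integral_holding_measure[of ms n k] by simp
qed

lemma moment_fps_1: "moment_fps 1 = 1"
  unfolding moment_fps_def jump_paths_1 by (simp add: path_prob_def holding_fps_def)

text \<open>Conditioning on the first jump: an exponential holding time with rate \<open>total_rate m\<close>,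
  followed by the chain started at \<open>i\<close>, which is reached with probability \<open>1 / ((m - i) total_rate m)\<close>.\<close>

lemma moment_fps_first_jump:
  assumes "m \<ge> 2"
  shows "moment_fps m = fps_const (1 / total_rate m) * exponential_moment_fps (total_rate m) *
    (\<Sum>i\<in>{1..<m}. fps_const (1 / real (m - i)) * moment_fps i)"
proof -
  define E where "E = fps_const (1 / total_rate m) * exponential_moment_fps (total_rate m)"
  have inj: "inj_on ((#) m) A" for A by (rule inj_onI) simp
  have "m \<noteq> 1" using assms by simp
  have "moment_fps m =
      (\<Sum>i\<in>{1..<m}. \<Sum>ms\<in>(#) m ` jump_paths i. fps_const (path_prob ms) * holding_fps ms)"
    unfolding moment_fps_def jump_paths_Cons[of m, OF \<open>m \<noteq> 1\<close>]
    by (intro sum.UNION_disjoint) (auto simp: finite_jump_paths, auto simp: jump_paths_def)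
  also have "\<dots> =
      (\<Sum>i\<in>{1..<m}. \<Sum>xs\<in>jump_paths i. fps_const (path_prob (m # xs)) * holding_fps (m # xs))"
    by (simp add: sum.reindex[OF inj])
  also have "\<dots> = (\<Sum>i\<in>{1..<m}. E * (fps_const (1 / real (m - i)) * moment_fps i))"
  proof (intro sum.cong refl)
    fix i assume i: "i \<in> {1..<m}"
    have "fps_const (path_prob (m # xs)) * holding_fps (m # xs) =
        E * fps_const (1 / real (m - i)) * (fps_const (path_prob xs) * holding_fps xs)"
      if "xs \<in> jump_paths i" for xs
      using that i unfolding E_def
      by (auto simp: jump_paths_def path_prob_Cons holding_fps_Cons jump_rate_def mult_ac
          simp flip: fps_const_mult)
    then show "(\<Sum>xs\<in>jump_paths i. fps_const (path_prob (m # xs)) * holding_fps (m # xs)) =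
        E * (fps_const (1 / real (m - i)) * moment_fps i)"
      unfolding moment_fps_def sum_distrib_left by (simp add: mult.assoc)
  qed
  also have "\<dots> = E * (\<Sum>i\<in>{1..<m}. fps_const (1 / real (m - i)) * moment_fps i)"
    by (simp add: sum_distrib_left)
  finally show ?thesis unfolding E_def .
qed

lemma moment_fps_rec:
  assumes "m \<ge> 2"
  shows "(fps_const (harm (m - 1)) - fps_X) * moment_fps m =
    (\<Sum>i\<in>{1..<m}. fps_const (1 / real (m - i)) * moment_fps i)"
proof -
  define H where "H = total_rate m"
  have H: "H = harm (m - 1)" "H > 0"
    unfolding H_def using assms by (simp_all add: total_rate_eq_harm total_rate_pos)
  have "(fps_const H - fps_X) * (fps_const (1 / H) * exponential_moment_fps H) =
      fps_const (1 / H) * ((fps_const H - fps_X) * exponential_moment_fps H)"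
    by (simp only: mult_ac)
  also have "\<dots> = 1"
    using H(2) by (simp add: exponential_moment_fps_mult flip: fps_const_mult)
  finally show ?thesis
    using moment_fps_first_jump[OF assms] unfolding H(1)[symmetric] H_def[symmetric]
    by (simp only: mult.assoc[symmetric] mult_1)
qed

text \<open>\<open>E[D\<^sub>m\<^sup>k] / k!\<close>; the case \<open>m = 1\<close> is special because \<open>D\<^sub>1 = 0\<close>.\<close>

definition moment_coeff :: "nat \<Rightarrow> nat \<Rightarrow> real" where
  "moment_coeff m k = (if m = 1 then 0 ^ k
     else (\<Sum>j\<in>{1..<m}. (-1) ^ (j + 1) * real ((m - 1) choose j) / harm j ^ k))"

lemma moment_coeff_0:
  assumes "m \<ge> 1"
  shows "moment_coeff m 0 = 1"
proof (cases "m = 1")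
  case False
  then have "(\<Sum>j\<le>m - 1. (-1) ^ j * real ((m - 1) choose j)) = 0"
    using assms by (intro choose_alternating_sum) simp
  moreover have "{..m - 1} = insert 0 {1..<m}" using assms by auto
  ultimately have "(\<Sum>j\<in>{1..<m}. (-1) ^ j * real ((m - 1) choose j)) = -1"
    by simp
  then show ?thesis using False by (simp add: moment_coeff_def sum_negf)
qed (simp add: moment_coeff_def)

lemma moment_coeff_eq_sum:
  assumes "1 \<le> i" "i \<le> m"
  shows "moment_coeff i k = (if i = 1 then 0 ^ k else 0) +
     (\<Sum>j\<in>{1..<m}. (-1) ^ (j + 1) * real ((i - 1) choose j) / harm j ^ k)"
proof -
  have "(\<Sum>j\<in>{1..<m}. (-1) ^ (j + 1) * real ((i - 1) choose j) / harm j ^ k)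
      = (\<Sum>j\<in>{1..<i}. (-1) ^ (j + 1) * real ((i - 1) choose j) / harm j ^ k :: real)"
    using assms by (intro sum.mono_neutral_right) auto
  then show ?thesis using assms by (simp add: moment_coeff_def)
qed

lemma sum_moment_coeff_div:
  assumes "m \<ge> 2" "k \<ge> 1"
  shows "(\<Sum>i\<in>{1..<m}. moment_coeff i k / real (m - i)) =
    harm (m - 1) * moment_coeff m k - moment_coeff m (k - 1)"
proof -
  let ?a = "\<lambda>j. (-1) ^ (j + 1) * real ((m - 1) choose j) :: real"
  have "(\<Sum>i\<in>{1..<m}. moment_coeff i k / real (m - i)) =
      (\<Sum>i\<in>{1..<m}. \<Sum>j\<in>{1..<m}. (-1) ^ (j + 1) / harm j ^ k * (real ((i - 1) choose j) / real (m - i)))"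
    using assms by (intro sum.cong refl) (simp add: moment_coeff_eq_sum[of _ m] sum_divide_distrib power_0_left)
  also have "\<dots> = (\<Sum>j\<in>{1..<m}. (-1) ^ (j + 1) / harm j ^ k *
      (\<Sum>i\<in>{1..<m}. real ((i - 1) choose j) / real (m - i)))"
    by (subst sum.swap) (simp add: sum_distrib_left)
  also have "\<dots> = (\<Sum>j\<in>{1..<m}. harm (m - 1) * (?a j / harm j ^ k) - ?a j / harm j ^ (k - 1))"
  proof (intro sum.cong refl)
    fix j assume "j \<in> {1..<m}"
    then have h: "harm j > (0 :: real)" by simp
    have k: "harm j ^ k = harm j * harm j ^ (k - 1)"
      using assms(2) by (simp flip: power_Suc)
    show "(-1) ^ (j + 1) / harm j ^ k * (\<Sum>i\<in>{1..<m}. real ((i - 1) choose j) / real (m - i)) =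
        harm (m - 1) * (?a j / harm j ^ k) - ?a j / harm j ^ (k - 1)"
    proof -
      have "s / (hj * p) * (c * (x - hj)) = x * (s * c / (hj * p)) - s * c / p"
        if "hj > 0" "p > 0" for s c x hj p :: real
        using that by (simp add: field_simps)
      from this[OF h] show ?thesis
        unfolding sum_binomial_div_eq_harm_diff' k using h by simp
    qed
  qed
  also have "\<dots> = harm (m - 1) * moment_coeff m k - moment_coeff m (k - 1)"
    using assms by (simp add: moment_coeff_def sum_subtractf sum_distrib_left sum_negf)
  finally show ?thesis .
qed

lemma moment_coeff_rec:
  assumes "m \<ge> 2"
  shows "(fps_const (harm (m - 1)) - fps_X) * Abs_fps (moment_coeff m) =
    (\<Sum>i\<in>{1..<m}. fps_const (1 / real (m - i)) * Abs_fps (moment_coeff i))"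
proof (rule fps_ext)
  fix k
  show "fps_nth ((fps_const (harm (m - 1)) - fps_X) * Abs_fps (moment_coeff m)) k =
      fps_nth (\<Sum>i\<in>{1..<m}. fps_const (1 / real (m - i)) * Abs_fps (moment_coeff i)) k"
  proof (cases k)
    case 0
    have "(\<Sum>i\<in>{1..<m}. 1 / real (m - i)) = total_rate m"
      unfolding total_rate_def jump_rate_def by (intro sum.cong) auto
    then show ?thesis
      using 0 assms by (simp add: fps_sum_nth moment_coeff_0 total_rate_eq_harm)
  next
    case (Suc l)
    then show ?thesis
      using sum_moment_coeff_div[OF assms, of k] by (simp add: fps_sum_nth algebra_simps)
  qed
qed

lemma moment_fps_eq: "m \<ge> 1 \<Longrightarrow> moment_fps m = Abs_fps (moment_coeff m)"
proof (induction m rule: less_induct)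
  case (less m)
  show ?case
  proof (cases "m = 1")
    case True
    show ?thesis unfolding True moment_fps_1 by (rule fps_ext) (simp add: moment_coeff_def)
  next
    case False
    then have m: "m \<ge> 2" using less.prems by simp
    have "fps_nth (fps_const (harm (m - 1)) - fps_X :: real fps) 1 \<noteq> 0"
      by simp
    then have "fps_const (harm (m - 1)) - fps_X \<noteq> (0 :: real fps)"
      by force
    moreover have "(fps_const (harm (m - 1)) - fps_X) * moment_fps m =
        (fps_const (harm (m - 1)) - fps_X) * Abs_fps (moment_coeff m)"
      unfolding moment_fps_rec[OF m] moment_coeff_rec[OF m] using less.IH by simp
    ultimately show ?thesis by simp
  qed
qed

lemma D_moment_eq_harmonic_sum:
  assumes "n \<ge> 2"
  shows "D_moment n k = fact k * (\<Sum>j\<in>{1..<n}. (-1) ^ (j + 1) * real ((n - 1) choose j) / harm j ^ k)"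
  using assms by (simp add: D_moment_eq_moment_fps moment_fps_eq moment_coeff_def)

section \<open>The digamma factor of the integrand\<close>

lemma Re_inverse_le:
  assumes "b > 0" "b \<le> Re z"
  shows "Re (inverse z) \<le> 1 / b"
proof -
  have pos: "Re z > 0" using assms by simp
  have "Re (inverse z) = Re z / ((Re z)\<^sup>2 + (Im z)\<^sup>2)" by simp
  also have "\<dots> \<le> Re z / (Re z)\<^sup>2"
    using pos by (intro divide_left_mono mult_pos_pos) (auto intro: add_pos_nonneg)
  also have "\<dots> = 1 / Re z" using pos by (simp add: power2_eq_square)
  also have "\<dots> \<le> 1 / b" using assms by (intro divide_left_mono) auto
  finally show ?thesis .
qed

lemma Re_euler_mascheroni [simp]: "Re euler_mascheroni = euler_mascheroni"
  using Re_complex_of_real[of euler_mascheroni] by (simp del: Re_complex_of_real)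

lemma Digamma_le_Re_Digamma:
  fixes w :: complex
  assumes "0 < a" "a \<le> Re w"
  shows "Digamma a \<le> Re (Digamma w)"
proof -
  have "w \<noteq> 0" using assms by auto
  have real: "(\<lambda>m. inverse (real (Suc m)) - inverse (a + real m)) sums (Digamma a + euler_mascheroni)"
    using summable_sums[OF summable_Digamma[of a]] assms by (simp add: Digamma_def)
  have "(\<lambda>m. inverse (of_nat (Suc m)) - inverse (w + of_nat m)) sums (Digamma w + euler_mascheroni)"
    using summable_sums[OF summable_Digamma[OF \<open>w \<noteq> 0\<close>]] by (simp add: Digamma_def)
  then have "(\<lambda>m. Re (inverse (of_nat (Suc m)) - inverse (w + of_nat m))) sums
      Re (Digamma w + euler_mascheroni)"
    by (rule sums_Re)
  then have cplx: "(\<lambda>m. Re (inverse (of_nat (Suc m)) - inverse (w + of_nat m))) sums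
      (Re (Digamma w) + euler_mascheroni)"
    by simp
  have "inverse (real (Suc m)) - inverse (a + real m) \<le> Re (inverse (of_nat (Suc m)) - inverse (w + of_nat m))"
    for m
  proof -
    have "Re (inverse (w + of_nat m)) \<le> 1 / (a + real m)"
      using assms by (intro Re_inverse_le) auto
    moreover have "Re (inverse (of_nat (Suc m) :: complex)) = inverse (real (Suc m))"
      by (metis Re_complex_of_real of_real_inverse of_real_of_nat_eq)
    ultimately show ?thesis by (simp add: inverse_eq_divide)
  qed
  from sums_le[OF this real cplx] show ?thesis by simp
qed

definition digamma_weight :: "nat \<Rightarrow> complex \<Rightarrow> complex" where
  "digamma_weight k s = 1 / (Digamma (1 - s) - Digamma 1) ^ k"

lemma Digamma_diff_pos: "\<sigma> < 0 \<Longrightarrow> 0 < Digamma (1 - \<sigma>) - Digamma (1 :: real)"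
  using Digamma_real_strict_mono[of 1 "1 - \<sigma>"] by simp

lemma norm_Digamma_diff_ge:
  fixes s :: complex
  assumes "Re s \<le> \<sigma>" "\<sigma> < 0"
  shows "Digamma (1 - \<sigma>) - Digamma 1 \<le> norm (Digamma (1 - s) - Digamma 1)"
proof -
  have "Digamma (1 - \<sigma>) \<le> Re (Digamma (1 - s))"
    using assms by (intro Digamma_le_Re_Digamma) auto
  then have "Digamma (1 - \<sigma>) - Digamma 1 \<le> Re (Digamma (1 - s) - Digamma 1)"
    by simp
  also have "\<dots> \<le> norm (Digamma (1 - s) - Digamma 1)"
    by (rule complex_Re_le_cmod)
  finally show ?thesis .
qed

lemma Digamma_diff_nonzero:
  fixes s :: complex
  assumes "Re s < 0"
  shows "Digamma (1 - s) - Digamma 1 \<noteq> 0"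
  using Digamma_diff_pos[OF assms] norm_Digamma_diff_ge[OF order_refl assms] by auto

lemma digamma_weight_holomorphic: "digamma_weight k holomorphic_on {s. Re s < 0}"
proof -
  have "(\<lambda>s. 1 - s) ` {s. Re s < 0} \<inter> \<int>\<^sub>\<le>\<^sub>0 = {}"
  proof (intro equals0I)
    fix z assume "z \<in> (\<lambda>s. 1 - s) ` {s. Re s < 0} \<inter> \<int>\<^sub>\<le>\<^sub>0"
    then obtain s where s: "Re s < 0" "1 - s \<in> \<int>\<^sub>\<le>\<^sub>0" by auto
    then obtain m :: nat where "1 - s = - of_nat m" by (elim nonpos_Ints_cases')
    then have "Re (1 - s) = Re (- of_nat m)" by simp
    then show False using s by simp
  qed
  then have "(Digamma \<circ> (\<lambda>s. 1 - s)) holomorphic_on {s. Re s < 0}"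
    by (intro holomorphic_on_compose holomorphic_intros holomorphic_on_Polygamma)
  moreover have "(Digamma (1 - s) - Digamma 1) ^ k \<noteq> 0" if "s \<in> {s. Re s < 0}" for s
    using Digamma_diff_nonzero that by simp
  ultimately show ?thesis
    unfolding digamma_weight_def[abs_def] by (intro holomorphic_intros) (simp_all add: o_def)
qed

lemma norm_digamma_weight_le:
  assumes "Re s \<le> \<sigma>" "\<sigma> < 0"
  shows "norm (digamma_weight k s) \<le> 1 / (Digamma (1 - \<sigma>) - Digamma 1) ^ k"
  using Digamma_diff_pos[OF assms(2)] norm_Digamma_diff_ge[OF assms]
  unfolding digamma_weight_def norm_divide norm_power norm_one
  by (intro divide_left_mono power_mono mult_pos_pos zero_less_power) auto

lemma digamma_weight_neg_of_nat: "digamma_weight k (- of_nat j) = 1 / complex_of_real (harm j) ^ k"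
proof -
  have "(1 :: complex) - (- of_nat j) = of_nat (Suc j)" by simp
  then have "digamma_weight k (- of_nat j) = 1 / harm j ^ k"
    unfolding digamma_weight_def by (simp only: Digamma_of_nat Digamma_1) simp
  also have "(harm j :: complex) = of_real (harm j)" by (simp add: harm_def)
  finally show ?thesis .
qed

lemma Gamma_ratio_eq_fact_div_pochhammer:
  fixes s :: complex
  assumes "s \<notin> \<int>\<^sub>\<le>\<^sub>0" "n \<ge> 1"
  shows "Gamma s * Gamma (of_nat n) / Gamma (of_nat n + s) = fact (n - 1) / pochhammer s n"
proof -
  have "Gamma (of_nat n :: complex) = fact (n - 1)"
    using Gamma_fact[of "n - 1"] assms(2) by (simp add: of_nat_diff)
  moreover have "Gamma (of_nat n + s) = pochhammer s n * Gamma s"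
    using pochhammer_Gamma[OF assms(1)] Gamma_nonzero[OF assms(1)] by (simp add: add.commute)
  ultimately show ?thesis using Gamma_nonzero[OF assms(1)] by simp
qed

lemma pochhammer_partial_fractions:
  fixes s :: "'a :: field_char_0"
  assumes "n \<ge> 1" "\<And>j. j < n \<Longrightarrow> s + of_nat j \<noteq> 0"
  shows "fact (n - 1) / pochhammer s n = (\<Sum>j<n. (-1) ^ j * of_nat ((n - 1) choose j) / (s + of_nat j))"
  using assms
proof (induction n rule: nat_induct_at_least)
  case base
  then show ?case by simp
next
  case (Suc n)
  have sn: "s + of_nat n \<noteq> 0" using Suc.prems by simp
  have partial: "(-1) ^ j * of_nat ((n - 1) choose j) / (s + of_nat j) * (of_nat n / (s + of_nat n)) =
      (-1) ^ j * of_nat (n choose j) * (1 / (s + of_nat j) - 1 / (s + of_nat n))" if "j < n" for j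
  proof -
    have sj: "s + of_nat j \<noteq> 0" using Suc.prems that by simp
    have diff: "of_nat (n - j) = (s + of_nat n) - (s + of_nat j)"
      using that by (simp add: of_nat_diff)
    have "(-1) ^ j * of_nat (n choose j) * (1 / (s + of_nat j) - 1 / (s + of_nat n)) =
        (-1) ^ j * (of_nat (n - j) * of_nat (n choose j)) / ((s + of_nat j) * (s + of_nat n))"
      unfolding diff using sj sn by (simp add: field_simps)
    also have "\<dots> = (-1) ^ j * (of_nat n * of_nat ((n - 1) choose j)) / ((s + of_nat j) * (s + of_nat n))"
      by (simp only: binomial_absorb_comp flip: of_nat_mult)
    also have "\<dots> = (-1) ^ j * of_nat ((n - 1) choose j) / (s + of_nat j) * (of_nat n / (s + of_nat n))"
      by simp
    finally show ?thesis ..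
  qed
  have IH: "fact (n - 1) / pochhammer s n = (\<Sum>j<n. (-1) ^ j * of_nat ((n - 1) choose j) / (s + of_nat j))"
    using Suc by simp
  have "fact (Suc n - 1) / pochhammer s (Suc n) = fact (n - 1) / pochhammer s n * (of_nat n / (s + of_nat n))"
    using Suc.hyps by (simp add: pochhammer_Suc fact_reduce[of n])
  also have "\<dots> = (\<Sum>j<n. (-1) ^ j * of_nat ((n - 1) choose j) / (s + of_nat j) * (of_nat n / (s + of_nat n)))"
    by (simp only: IH sum_distrib_right)
  also have "\<dots> = (\<Sum>j<n. (-1) ^ j * of_nat (n choose j) * (1 / (s + of_nat j) - 1 / (s + of_nat n)))"
    by (rule sum.cong[OF refl partial]) simp
  also have "\<dots> = (\<Sum>j<n. (-1) ^ j * of_nat (n choose j) / (s + of_nat j)) -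
      (\<Sum>j<n. (-1) ^ j * of_nat (n choose j)) / (s + of_nat n)"
    by (simp add: algebra_simps sum_subtractf sum_divide_distrib)
  also have "(\<Sum>j<n. (-1) ^ j * of_nat (n choose j) :: 'a) = - ((-1) ^ n)"
    using choose_alternating_sum[of n] Suc.hyps by (simp add: lessThan_Suc_atMost[symmetric] eq_neg_iff_add_eq_0)
  finally show ?case by simp
qed

lemma norm_pochhammer_ge_far:
  fixes s :: complex
  assumes "2 * real n \<le> norm s" "n \<ge> 2"
  shows "(norm s)\<^sup>2 / 4 \<le> norm (pochhammer s n)"
proof -
  have "norm s / 2 \<le> norm (s + of_nat l)" if "l < n" for l
    using norm_triangle_ineq2[of s "- of_nat l"] that assms by simp
  then have "(norm s / 2) ^ n \<le> norm (pochhammer s n)"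
    using prod_mono[of "{..<n}" "\<lambda>_. norm s / 2" "\<lambda>l. norm (s + of_nat l)"]
    by (simp add: pochhammer_prod prod_norm atLeast0LessThan)
  moreover have "(norm s / 2)\<^sup>2 \<le> (norm s / 2) ^ n"
    using assms by (intro power_increasing) auto
  moreover have "(norm s)\<^sup>2 / 4 = (norm s / 2)\<^sup>2" by (simp add: power2_eq_square)
  ultimately show ?thesis by linarith
qed

lemma norm_pochhammer_ge_line:
  assumes "-1 < \<sigma>" "\<sigma> < 0" "n \<ge> 2"
  shows "min (-\<sigma>) (1 + \<sigma>) ^ n * (1 + t\<^sup>2) \<le> norm (pochhammer (Complex \<sigma> t) n)"
proof -
  define \<delta> where "\<delta> = min (-\<sigma>) (1 + \<sigma>)"
  have \<delta>: "0 < \<delta>" "\<delta> \<le> 1" using assms unfolding \<delta>_def by auto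
  define \<rho> where "\<rho> = sqrt (\<delta>\<^sup>2 + t\<^sup>2)"
  have "\<rho> \<le> norm (Complex \<sigma> t + of_nat l)" for l
  proof -
    have "\<delta> \<le> \<bar>\<sigma> + real l\<bar>" unfolding \<delta>_def using assms by (cases "l = 0") auto
    then have "\<delta>\<^sup>2 \<le> (\<sigma> + real l)\<^sup>2" using \<delta> by (metis abs_le_square_iff abs_of_pos)
    then show ?thesis unfolding \<rho>_def by (simp add: cmod_def)
  qed
  then have "\<rho> ^ n \<le> norm (pochhammer (Complex \<sigma> t) n)"
    using prod_mono[of "{..<n}" "\<lambda>_. \<rho>" "\<lambda>l. norm (Complex \<sigma> t + of_nat l)"]
    by (simp add: pochhammer_prod prod_norm atLeast0LessThan \<rho>_def)
  moreover have "\<delta> ^ n * (1 + t\<^sup>2) \<le> \<rho> ^ n"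
  proof -
    obtain m where n: "n = m + 2" using assms(3) by (metis le_add_diff_inverse2)
    have "\<delta>\<^sup>2 * t\<^sup>2 \<le> t\<^sup>2" using \<delta> by (simp add: mult_left_le_one_le power_le_one)
    then have "\<delta>\<^sup>2 * (1 + t\<^sup>2) \<le> \<rho>\<^sup>2" unfolding \<rho>_def by (simp add: algebra_simps)
    moreover have "\<delta> ^ m \<le> \<rho> ^ m"
      unfolding \<rho>_def using \<delta> by (intro power_mono real_le_rsqrt) auto
    ultimately have "\<delta>\<^sup>2 * (1 + t\<^sup>2) * \<delta> ^ m \<le> \<rho>\<^sup>2 * \<rho> ^ m"
      using \<delta> by (intro mult_mono) auto
    then show ?thesis unfolding n power_add by (simp only: mult_ac)
  qed
  ultimately show ?thesis unfolding \<delta>_def by simp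
qed

section \<open>Contour integration\<close>

lemma has_contour_integral_Cauchy_sum:
  assumes S: "open S" "convex S" "f holomorphic_on S"
    and \<gamma>: "valid_path \<gamma>" "pathfinish \<gamma> = pathstart \<gamma>" "path_image \<gamma> \<subseteq> S"
    and z: "finite I" "\<And>j. j \<in> I \<Longrightarrow> z j \<notin> path_image \<gamma>"
  shows "((\<lambda>w. \<Sum>j\<in>I. c j * (f w / (w - z j))) has_contour_integral
      (2 * of_real pi * \<i> * (\<Sum>j\<in>I. c j * winding_number \<gamma> (z j) * f (z j)))) \<gamma>"
proof -
  have "((\<lambda>w. f w / (w - z j)) has_contour_integral (2 * of_real pi * \<i> * winding_number \<gamma> (z j) * f (z j))) \<gamma>"
    if "j \<in> I" for j
  proof (cases "z j \<in> S")
    case True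
    then show ?thesis
      using Cauchy_integral_formula_convex_simple[OF S(2,3) _ \<gamma>(1) _ \<gamma>(2)] interior_open[OF S(1)]
        \<gamma>(3) z(2)[OF that] by auto
  next
    case False
    then have "(\<lambda>w. f w / (w - z j)) holomorphic_on S"
      using S(3) by (intro holomorphic_intros) auto
    moreover have "winding_number \<gamma> (z j) = 0"
      using False \<gamma> S(2) by (intro winding_number_zero_outside[of _ S]) (auto intro: valid_path_imp_path)
    ultimately show ?thesis
      using Cauchy_theorem_convex_simple[OF _ S(2) \<gamma>(1,3,2)] by simp
  qed
  then have "((\<lambda>w. \<Sum>j\<in>I. c j * (f w / (w - z j))) has_contour_integral
      (\<Sum>j\<in>I. c j * (2 * of_real pi * \<i> * winding_number \<gamma> (z j) * f (z j)))) \<gamma>"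
    by (intro has_contour_integral_sum has_contour_integral_lmul z)
  then show ?thesis by (simp add: sum_distrib_left mult_ac)
qed

lemma contour_integral_rectpath:
  assumes "g contour_integrable_on rectpath a1 a3"
  defines "a2 \<equiv> Complex (Re a3) (Im a1)" and "a4 \<equiv> Complex (Re a1) (Im a3)"
  shows "contour_integral (rectpath a1 a3) g =
    contour_integral (linepath a1 a2) g + contour_integral (linepath a2 a3) g +
    contour_integral (linepath a3 a4) g + contour_integral (linepath a4 a1) g"
proof -
  have rp: "rectpath a1 a3 = linepath a1 a2 +++ (linepath a2 a3 +++ (linepath a3 a4 +++ linepath a4 a1))"
    unfolding rectpath_def a2_def a4_def Let_def by simp
  have i: "g contour_integrable_on (linepath a1 a2 +++ (linepath a2 a3 +++ (linepath a3 a4 +++ linepath a4 a1)))"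
    using assms(1) unfolding rp .
  have i1: "g contour_integrable_on (linepath a2 a3 +++ (linepath a3 a4 +++ linepath a4 a1))"
    by (rule contour_integrable_joinD2[OF i]) (auto intro!: valid_path_join)
  have i2: "g contour_integrable_on (linepath a3 a4 +++ linepath a4 a1)"
    by (rule contour_integrable_joinD2[OF i1]) (auto intro!: valid_path_join)
  show ?thesis
    unfolding rp using contour_integrable_joinD1[OF i] contour_integrable_joinD1[OF i1]
      contour_integrable_joinD1[OF i2] contour_integrable_joinD2[OF i2] i1 i2
    by (simp add: valid_path_join)
qed

lemma norm_contour_integral_rectpath_minus_right_edge:
  fixes g :: "complex \<Rightarrow> complex"
  assumes g: "g contour_integrable_on rectpath (Complex a (-T)) (Complex b T)"
    and "a \<le> b" "0 < T" "0 \<le> M"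
    and bound: "\<And>x. a \<le> Re x \<Longrightarrow> Re x \<le> b \<Longrightarrow> \<bar>Im x\<bar> \<le> T \<Longrightarrow> Re x = a \<or> \<bar>Im x\<bar> = T \<Longrightarrow> norm (g x) \<le> M"
  shows "norm (contour_integral (rectpath (Complex a (-T)) (Complex b T)) g - \<i> * integral {-T..T} (\<lambda>t. g (Complex b t)))
    \<le> M * (2 * (b - a) + 2 * T)"
proof -
  define a1 a2 a3 a4 where "a1 = Complex a (-T)" "a2 = Complex b (-T)" "a3 = Complex b T" "a4 = Complex a T"
  have rp: "rectpath a1 a3 = linepath a1 a2 +++ (linepath a2 a3 +++ (linepath a3 a4 +++ linepath a4 a1))"
    unfolding rectpath_def a1_a2_a3_a4_def Let_def by simp
  have i: "g contour_integrable_on linepath a1 a2" "g contour_integrable_on linepath a3 a4"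
      "g contour_integrable_on linepath a4 a1"
    using g unfolding a1_a2_a3_a4_def[symmetric] rp
    by (auto dest!: contour_integrable_joinD1 contour_integrable_joinD2 intro!: valid_path_join)
  have "contour_integral (linepath a2 a3) g = \<i> * integral {-T..T} (\<lambda>t. g (Complex b t))"
    using \<open>0 < T\<close> by (intro contour_integral_linepath_same_Re) (auto simp: a1_a2_a3_a4_def)
  then have "contour_integral (rectpath a1 a3) g - \<i> * integral {-T..T} (\<lambda>t. g (Complex b t)) =
      contour_integral (linepath a1 a2) g + contour_integral (linepath a3 a4) g + contour_integral (linepath a4 a1) g"
    using contour_integral_rectpath[OF g[folded a1_a2_a3_a4_def]] by (simp add: a1_a2_a3_a4_def)
  also have "norm \<dots> \<le> M * (b - a) + M * (b - a) + M * (2 * T)"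
  proof (intro norm_triangle_le add_mono)
    show "norm (contour_integral (linepath a1 a2) g) \<le> M * (b - a)"
      using contour_integral_bound_linepath[OF i(1) \<open>0 \<le> M\<close>] bound \<open>a \<le> b\<close> \<open>0 < T\<close>
      by (fastforce simp: a1_a2_a3_a4_def closed_segment_same_Im closed_segment_eq_real_ivl cmod_def)
    have "closed_segment a3 a4 = closed_segment a4 a3"
      by (rule closed_segment_commute)
    then show "norm (contour_integral (linepath a3 a4) g) \<le> M * (b - a)"
      using contour_integral_bound_linepath[OF i(2) \<open>0 \<le> M\<close>] bound \<open>a \<le> b\<close> \<open>0 < T\<close>
      by (fastforce simp: a1_a2_a3_a4_def closed_segment_same_Im closed_segment_eq_real_ivl cmod_def)
    have "closed_segment a4 a1 = closed_segment a1 a4"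
      by (rule closed_segment_commute)
    moreover have "norm (a1 - a4) = 2 * T"
    proof -
      have "a1 - a4 = of_real (- (2 * T)) * \<i>"
        by (simp add: a1_a2_a3_a4_def complex_eq_iff)
      then show ?thesis using \<open>0 < T\<close> by (simp add: norm_mult)
    qed
    ultimately show "norm (contour_integral (linepath a4 a1) g) \<le> M * (2 * T)"
      using contour_integral_bound_linepath[OF i(3) \<open>0 \<le> M\<close>] bound \<open>a \<le> b\<close> \<open>0 < T\<close>
      by (fastforce simp: a1_a2_a3_a4_def closed_segment_same_Re closed_segment_eq_real_ivl cmod_def)
  qed
  finally show ?thesis unfolding a1_a2_a3_a4_def by (simp add: algebra_simps)
qed

lemma tendsto_integral_symmetric_interval:
  fixes g :: "real \<Rightarrow> 'a :: euclidean_space"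
  assumes "integrable lborel g"
  shows "((\<lambda>T. integral {-T..T} g) \<longlongrightarrow> (\<integral>t. g t \<partial>lborel)) at_top"
proof (rule tendsto_at_topI_sequentially)
  fix X :: "nat \<Rightarrow> real" assume X: "filterlim X at_top sequentially"
  have "integral {-X m..X m} g = (\<integral>t. indicator {-X m..X m} t *\<^sub>R g t \<partial>lborel)" for m
    using set_borel_integral_eq_integral(2)[of "{-X m..X m}" g] assms
    by (simp add: set_integrable_def set_lebesgue_integral_def integrable_mult_indicator)
  moreover have "(\<lambda>m. \<integral>t. indicator {-X m..X m} t *\<^sub>R g t \<partial>lborel) \<longlonglongrightarrow> (\<integral>t. g t \<partial>lborel)"
  proof (rule integral_dominated_convergence[where w="\<lambda>t. norm (g t)"])
    show "AE t in lborel. (\<lambda>m. indicator {-X m..X m} t *\<^sub>R g t) \<longlonglongrightarrow> g t"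
    proof (intro AE_I2 tendsto_eventually)
      fix t
      have "eventually (\<lambda>m. \<bar>t\<bar> \<le> X m) sequentially"
        using X unfolding filterlim_at_top by blast
      then show "eventually (\<lambda>m. indicator {-X m..X m} t *\<^sub>R g t = g t) sequentially"
        by eventually_elim (auto simp: abs_le_iff)
    qed
  qed (use assms in \<open>auto simp: indicator_def\<close>)
  ultimately show "(\<lambda>m. integral {-X m..X m} g) \<longlonglongrightarrow> (\<integral>t. g t \<partial>lborel)" by simp
qed

section \<open>The Mellin--Barnes integral\<close>

definition mellin_integrand :: "nat \<Rightarrow> nat \<Rightarrow> complex \<Rightarrow> complex" where
  "mellin_integrand n k s = fact (n - 1) * digamma_weight k s / pochhammer s n"

lemma mellin_integrand_eq_Gamma:
  assumes "s \<notin> \<int>\<^sub>\<le>\<^sub>0" "n \<ge> 1"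
  shows "Gamma s * Gamma (of_nat n) / Gamma (of_nat n + s) / (Digamma (1 - s) - Digamma 1) ^ k =
    mellin_integrand n k s"
  using Gamma_ratio_eq_fact_div_pochhammer[OF assms]
  by (simp add: mellin_integrand_def digamma_weight_def)

lemma norm_mellin_integrand_le:
  assumes "Re s \<le> \<sigma>" "\<sigma> < 0"
  shows "norm (mellin_integrand n k s) \<le>
    fact (n - 1) / (Digamma (1 - \<sigma>) - Digamma 1) ^ k / norm (pochhammer s n)"
proof -
  have "fact (n - 1) * norm (digamma_weight k s) / norm (pochhammer s n) \<le>
      fact (n - 1) * (1 / (Digamma (1 - \<sigma>) - Digamma 1) ^ k) / norm (pochhammer s n)"
    using norm_digamma_weight_le[OF assms, of k] by (intro divide_right_mono mult_left_mono) auto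
  then show ?thesis by (simp add: mellin_integrand_def norm_divide norm_mult)
qed

lemma mellin_integrand_partial_fractions:
  assumes "n \<ge> 1" "\<And>j. j < n \<Longrightarrow> s \<noteq> - of_nat j"
  shows "mellin_integrand n k s =
    (\<Sum>j<n. (-1) ^ j * of_nat ((n - 1) choose j) * (digamma_weight k s / (s - (- of_nat j))))"
proof -
  have "s + of_nat j \<noteq> 0" if "j < n" for j
    using assms(2)[OF that] by (auto simp: add_eq_0_iff)
  then have "fact (n - 1) / pochhammer s n = (\<Sum>j<n. (-1) ^ j * of_nat ((n - 1) choose j) / (s + of_nat j))"
    using pochhammer_partial_fractions[of n s] assms(1) by simp
  then have "mellin_integrand n k s =
      digamma_weight k s * (\<Sum>j<n. (-1) ^ j * of_nat ((n - 1) choose j) / (s + of_nat j))"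
    unfolding mellin_integrand_def by (metis times_divide_eq_right mult.commute)
  then show ?thesis by (simp add: sum_distrib_left mult.commute)
qed

lemma
  assumes "-1 < \<sigma>" "\<sigma> < 0" "1 < T" "real j < T"
  shows winding_number_rectpath_neg_of_nat:
      "winding_number (rectpath (Complex (-T) (-T)) (Complex \<sigma> T)) (- of_nat j) = (if j = 0 then 0 else 1)"
    and neg_of_nat_notin_path_image_rectpath:
      "- of_nat j \<notin> path_image (rectpath (Complex (-T) (-T)) (Complex \<sigma> T))"
proof -
  define a1 a3 where "a1 = Complex (-T) (-T)" and "a3 = Complex \<sigma> T"
  have le: "Re a1 \<le> Re a3" "Im a1 \<le> Im a3" using assms unfolding a1_def a3_def by auto
  have inside: "- of_nat j \<in> box a1 a3" if "j \<noteq> 0"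
    using that assms by (auto simp: a1_def a3_def in_box_complex_iff)
  have outside: "0 \<notin> cbox a1 a3"
    using assms by (auto simp: a1_def a3_def in_cbox_complex_iff)
  show "winding_number (rectpath a1 a3) (- of_nat j) = (if j = 0 then 0 else 1)"
    using inside outside by (simp add: winding_number_rectpath winding_number_rectpath_outside[OF le])
  show "- of_nat j \<notin> path_image (rectpath a1 a3)"
    using inside outside path_image_rectpath_cbox_minus_box[OF le] by (cases "j = 0") auto
qed

definition mellin_residue_sum :: "nat \<Rightarrow> nat \<Rightarrow> complex" where
  "mellin_residue_sum n k =
    (\<Sum>j\<in>{1..<n}. (-1) ^ j * of_nat ((n - 1) choose j) * digamma_weight k (- of_nat j))"

lemma mellin_residue_sum_eq_harmonic_sum:
  "mellin_residue_sum n k =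
    - complex_of_real (\<Sum>j\<in>{1..<n}. (-1) ^ (j + 1) * real ((n - 1) choose j) / harm j ^ k)"
  unfolding mellin_residue_sum_def by (simp add: digamma_weight_neg_of_nat sum_negf[symmetric])

lemma mellin_integrand_has_contour_integral_rectpath:
  assumes "n \<ge> 2" "-1 < \<sigma>" "\<sigma> < 0" "real n < T"
  shows "(mellin_integrand n k has_contour_integral 2 * of_real pi * \<i> * mellin_residue_sum n k)
    (rectpath (Complex (-T) (-T)) (Complex \<sigma> T))"
proof -
  define \<gamma> where "\<gamma> = rectpath (Complex (-T) (-T)) (Complex \<sigma> T)"
  define c :: "nat \<Rightarrow> complex" where "c j = (-1) ^ j * of_nat ((n - 1) choose j)" for j
  have T: "1 < T" "real j < T" if "j < n" for j
    using assms that by auto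
  have "path_image \<gamma> \<subseteq> cbox (Complex (-T) (-T)) (Complex \<sigma> T)"
    unfolding \<gamma>_def using assms T by (intro path_image_rectpath_subset_cbox) auto
  then have "path_image \<gamma> \<subseteq> {s. Re s < 0}"
    using assms by (auto simp: in_cbox_complex_iff)
  then have int: "((\<lambda>s. \<Sum>j<n. c j * (digamma_weight k s / (s - (- of_nat j)))) has_contour_integral
      (2 * of_real pi * \<i> * (\<Sum>j<n. c j * winding_number \<gamma> (- of_nat j) * digamma_weight k (- of_nat j)))) \<gamma>"
    unfolding \<gamma>_def using neg_of_nat_notin_path_image_rectpath[OF assms(2,3) T]
    by (intro has_contour_integral_Cauchy_sum[OF open_halfspace_Re_lt convex_halfspace_Re_lt
        digamma_weight_holomorphic]) auto
  have eq: "(\<Sum>j<n. c j * (digamma_weight k s / (s - (- of_nat j)))) = mellin_integrand n k s"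
    if "s \<in> path_image \<gamma>" for s
    using mellin_integrand_partial_fractions[of n s] assms(1) that
      neg_of_nat_notin_path_image_rectpath[OF assms(2,3) T]
    unfolding \<gamma>_def c_def by fastforce
  have "(\<Sum>j<n. c j * winding_number \<gamma> (- of_nat j) * digamma_weight k (- of_nat j)) =
      (\<Sum>j\<in>{1..<n}. c j * digamma_weight k (- of_nat j))"
    unfolding \<gamma>_def
    by (rule sum.mono_neutral_cong_right) (auto simp: winding_number_rectpath_neg_of_nat[OF assms(2,3) T])
  with has_contour_integral_eq[OF int eq] show ?thesis
    unfolding \<gamma>_def c_def mellin_residue_sum_def by simp
qed

lemma Complex_neq_neg_of_nat:
  assumes "-1 < \<sigma>" "\<sigma> < 0"
  shows "Complex \<sigma> t \<noteq> - of_nat j"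
proof
  assume "Complex \<sigma> t = - of_nat j"
  then have "\<sigma> = - real j" by (simp add: complex_eq_iff)
  then show False using assms by (cases j) auto
qed

lemma pochhammer_Complex_nonzero:
  assumes "-1 < \<sigma>" "\<sigma> < 0"
  shows "pochhammer (Complex \<sigma> t) n \<noteq> 0"
  using Complex_neq_neg_of_nat[OF assms] by (simp add: pochhammer_eq_0_iff)

lemma continuous_on_mellin_integrand_line:
  assumes "-1 < \<sigma>" "\<sigma> < 0"
  shows "continuous_on UNIV (\<lambda>t. mellin_integrand n k (Complex \<sigma> t))"
proof -
  have line: "continuous_on UNIV (\<lambda>t. Complex \<sigma> t)"
    unfolding Complex_eq by (intro continuous_intros)
  have "continuous_on UNIV (\<lambda>t. digamma_weight k (Complex \<sigma> t))"
    using assms by (intro continuous_on_compose2[OF holomorphic_on_imp_continuous_on[OF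
        digamma_weight_holomorphic] line]) auto
  moreover have "continuous_on UNIV (\<lambda>t. pochhammer (Complex \<sigma> t) n)"
    by (intro continuous_on_compose2[OF continuous_on_pochhammer line]) auto
  ultimately show ?thesis
    using pochhammer_Complex_nonzero[OF assms]
    unfolding mellin_integrand_def by (intro continuous_intros) auto
qed

lemma mellin_integrand_integrable:
  assumes "n \<ge> 2" "-1 < \<sigma>" "\<sigma> < 0"
  shows "integrable lborel (\<lambda>t. mellin_integrand n k (Complex \<sigma> t))"
proof -
  define \<delta> where "\<delta> = min (-\<sigma>) (1 + \<sigma>)"
  define D where "D = fact (n - 1) / (Digamma (1 - \<sigma>) - Digamma 1) ^ k / \<delta> ^ n"
  have "0 < \<delta>" using assms unfolding \<delta>_def by auto
  have "0 < Digamma (1 - \<sigma>) - Digamma 1"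
    using Digamma_diff_pos[OF assms(3)] .
  then have D: "0 \<le> D" using \<open>0 < \<delta>\<close> by (simp add: D_def)
  have bound: "norm (mellin_integrand n k (Complex \<sigma> t)) \<le> norm (D * inverse (1 + t\<^sup>2))" for t
  proof -
    have "norm (mellin_integrand n k (Complex \<sigma> t)) \<le>
        fact (n - 1) / (Digamma (1 - \<sigma>) - Digamma 1) ^ k / norm (pochhammer (Complex \<sigma> t) n)"
      using assms by (intro norm_mellin_integrand_le) auto
    also have "\<dots> \<le> fact (n - 1) / (Digamma (1 - \<sigma>) - Digamma 1) ^ k / (\<delta> ^ n * (1 + t\<^sup>2))"
      using norm_pochhammer_ge_line[OF assms(2,3,1), of t] \<open>0 < \<delta>\<close> \<open>0 < Digamma (1 - \<sigma>) - Digamma 1\<close>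
        pochhammer_Complex_nonzero[OF assms(2,3)]
      unfolding \<delta>_def by (intro divide_left_mono mult_pos_pos) (auto intro: add_pos_nonneg)
    also have "\<dots> = D * inverse (1 + t\<^sup>2)"
      by (simp add: D_def divide_inverse inverse_mult_distrib mult_ac)
    also have "\<dots> = norm (D * inverse (1 + t\<^sup>2))"
      using D by (simp add: abs_mult add_pos_nonneg)
    finally show ?thesis .
  qed
  have int: "integrable lborel (\<lambda>t::real. D * inverse (1 + t\<^sup>2))"
    using integrable_inverse_1_plus_square by (simp add: set_integrable_def einterval_iff)
  have meas: "(\<lambda>t. mellin_integrand n k (Complex \<sigma> t)) \<in> borel_measurable lborel"
    using borel_measurable_continuous_onI[OF continuous_on_mellin_integrand_line[OF assms(2,3)]]
    by simp
  show ?thesis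
    using bound by (intro Bochner_Integration.integrable_bound[OF int meas] AE_I2)
qed

lemma norm_mellin_integrand_le_far:
  assumes "n \<ge> 2" "\<sigma> < 0" "Re x \<le> \<sigma>" "2 * real n \<le> T" "T \<le> norm x"
  shows "norm (mellin_integrand n k x) \<le> 4 * fact (n - 1) / (Digamma (1 - \<sigma>) - Digamma 1) ^ k / T\<^sup>2"
proof -
  define K where "K = 4 * fact (n - 1) / (Digamma (1 - \<sigma>) - Digamma 1) ^ k"
  have gap: "0 < Digamma (1 - \<sigma>) - Digamma 1" using Digamma_diff_pos[OF assms(2)] .
  then have K: "0 \<le> K" by (simp add: K_def)
  have "0 < T" using assms by simp
  have "norm (mellin_integrand n k x) \<le>
      fact (n - 1) / (Digamma (1 - \<sigma>) - Digamma 1) ^ k / norm (pochhammer x n)"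
    using assms by (intro norm_mellin_integrand_le)
  also have "\<dots> \<le> fact (n - 1) / (Digamma (1 - \<sigma>) - Digamma 1) ^ k / ((norm x)\<^sup>2 / 4)"
    using norm_pochhammer_ge_far[of n x] assms \<open>0 < T\<close> gap
    by (intro divide_left_mono mult_pos_pos) auto
  also have "\<dots> = K / (norm x)\<^sup>2" by (simp add: K_def)
  also have "\<dots> \<le> K / T\<^sup>2"
    using assms \<open>0 < T\<close> K by (intro divide_left_mono power_mono mult_pos_pos) auto
  finally show ?thesis unfolding K_def .
qed

lemma norm_mellin_integral_truncated_minus_residues_le:
  fixes n k :: nat
  assumes n: "n \<ge> 2" and \<sigma>: "-1 < \<sigma>" "\<sigma> < 0" and T: "2 * real n + 1 \<le> T"
  defines "K \<equiv> 4 * fact (n - 1) / (Digamma (1 - \<sigma>) - Digamma 1) ^ k"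
  shows "norm (\<i> * integral {-T..T} (\<lambda>t. mellin_integrand n k (Complex \<sigma> t)) -
      2 * of_real pi * \<i> * mellin_residue_sum n k) \<le> 4 * K / T"
proof -
  let ?C = "2 * of_real pi * \<i> * mellin_residue_sum n k"
  have K: "0 \<le> K" using Digamma_diff_pos[OF \<sigma>(2)] by (simp add: K_def)
  have "0 < T" using T by simp
  have rect: "(mellin_integrand n k has_contour_integral ?C) (rectpath (Complex (-T) (-T)) (Complex \<sigma> T))"
    using T by (intro mellin_integrand_has_contour_integral_rectpath n \<sigma>) auto
  have "norm (?C - \<i> * integral {-T..T} (\<lambda>t. mellin_integrand n k (Complex \<sigma> t))) \<le>
      K / T\<^sup>2 * (2 * (\<sigma> - -T) + 2 * T)"
    unfolding contour_integral_unique[OF rect, symmetric]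
  proof (rule norm_contour_integral_rectpath_minus_right_edge)
    show "mellin_integrand n k contour_integrable_on rectpath (Complex (-T) (-T)) (Complex \<sigma> T)"
      using rect by (rule has_contour_integral_integrable)
    show "norm (mellin_integrand n k x) \<le> K / T\<^sup>2"
      if "-T \<le> Re x" "Re x \<le> \<sigma>" "\<bar>Im x\<bar> \<le> T" "Re x = -T \<or> \<bar>Im x\<bar> = T" for x
    proof -
      have "T \<le> norm x"
        using that abs_Re_le_cmod[of x] abs_Im_le_cmod[of x] \<open>0 < T\<close> by auto
      then show ?thesis
        unfolding K_def using that T n \<sigma> by (intro norm_mellin_integrand_le_far) auto
    qed
  qed (use K T \<sigma> in auto)
  also have "\<dots> \<le> K / T\<^sup>2 * (4 * T)"
    using K \<sigma> by (intro mult_left_mono) auto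
  also have "\<dots> = 4 * K / T" by (simp add: power2_eq_square)
  finally show ?thesis by (simp add: norm_minus_commute)
qed

lemma mellin_integrand_line_integral:
  assumes "n \<ge> 2" "-1 < \<sigma>" "\<sigma> < 0"
  shows "\<i> * (\<integral>t. mellin_integrand n k (Complex \<sigma> t) \<partial>lborel) = 2 * of_real pi * \<i> * mellin_residue_sum n k"
    (is "_ = ?C")
proof -
  define g where "g t = mellin_integrand n k (Complex \<sigma> t)" for t
  define K where "K = 4 * fact (n - 1) / (Digamma (1 - \<sigma>) - Digamma 1) ^ k"
  have "((\<lambda>T. \<i> * integral {-T..T} g - ?C) \<longlongrightarrow> 0) at_top"
  proof (rule Lim_null_comparison)
    show "\<forall>\<^sub>F T in at_top. norm (\<i> * integral {-T..T} g - ?C) \<le> 4 * K / T"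
      unfolding g_def K_def using norm_mellin_integral_truncated_minus_residues_le[OF assms]
      by (intro eventually_at_top_linorderI) auto
    show "((\<lambda>T. 4 * K / T) \<longlongrightarrow> 0) at_top"
      by (intro tendsto_divide_0[OF tendsto_const] filterlim_at_top_imp_at_infinity filterlim_ident)
  qed
  then have lim_C: "((\<lambda>T. \<i> * integral {-T..T} g) \<longlongrightarrow> ?C) at_top"
    by (simp add: LIM_zero_iff)
  have lim_integral: "((\<lambda>T. \<i> * integral {-T..T} g) \<longlongrightarrow> \<i> * (\<integral>t. g t \<partial>lborel)) at_top"
    unfolding g_def
    by (intro tendsto_mult_left tendsto_integral_symmetric_interval mellin_integrand_integrable assms)
  show ?thesis
    using tendsto_unique[OF _ lim_integral lim_C] unfolding g_def by simp
qed

theorem mainTheorem5: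
  fixes k n :: nat and \<sigma> :: real
  assumes "k \<ge> 1" and "n \<ge> 2" and "-1 < \<sigma>" and "\<sigma> < 0"
  defines "F \<equiv> (\<lambda>s::complex. (Gamma s * Gamma (of_nat n) / Gamma (of_nat n + s))
                 / (Digamma (1 - s) - Digamma 1) ^ k)"
  shows "integrable lborel (\<lambda>t::real. F (Complex \<sigma> t)) \<and>
         complex_of_real (D_moment n k) =
           - (of_nat (fact k) / (2 * of_real pi * \<i>)) *
             (\<i> * (\<integral>t. F (Complex \<sigma> t) \<partial>lborel))"
proof -
  define X where "X = (\<Sum>j\<in>{1..<n}. (-1) ^ (j + 1) * real ((n - 1) choose j) / harm j ^ k)"
  have "Complex \<sigma> t \<notin> \<int>\<^sub>\<le>\<^sub>0" for t
    using Complex_neq_neg_of_nat[OF assms(3,4)] by (auto elim!: nonpos_Ints_cases')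
  then have F: "(\<lambda>t. F (Complex \<sigma> t)) = (\<lambda>t. mellin_integrand n k (Complex \<sigma> t))"
    unfolding F_def using assms(2) by (intro ext mellin_integrand_eq_Gamma) auto
  have "\<i> * (\<integral>t. F (Complex \<sigma> t) \<partial>lborel) = - 2 * of_real pi * \<i> * of_real X"
    unfolding F mellin_integrand_line_integral[OF assms(2-4)] mellin_residue_sum_eq_harmonic_sum X_def
    by simp
  moreover have "D_moment n k = fact k * X"
    unfolding X_def using D_moment_eq_harmonic_sum[OF assms(2)] .
  moreover have "- (of_nat (fact k) / (2 * of_real pi * \<i>)) * (- 2 * of_real pi * \<i> * of_real X) =
      of_nat (fact k) * complex_of_real X"
    by (simp add: field_simps)
  ultimately show ?thesis
    unfolding F using mellin_integrand_integrable[OF assms(2-4)] by simp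
qed

end
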